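(* Let $A,B\in\operatorname{Sym}(n,\mathbb{R})$ be positive semidefinite with $\operatorname{rank}A\ge2$ and $\operatorname{rank}B\ge2$, and let $D:=\{x\in\mathbb{R}^n:{}^txAx<1\}$, $E:=\{x\in\mathbb{R}^n:{}^txBx<1\}$. Suppose the boundaries of $D$ and $E$ do not intersect transversally anywhere, i.e. $Ax$ and $Bx$ are linearly dependent for every $x$ with ${}^txAx={}^txBx=1$. If $E\cap D\ne\emptyset$, then $E\subset D$ or $D\subset E$. *)

theory Defs
  imports "HOL-Analysis.Analysis"
begin

end

theory Submission
  imports Defs
begin

text \<open>
  Non-transversality together with positive semidefiniteness gives
  \<open>x\<^sup>T A x = x\<^sup>T B x \<Longrightarrow> A x = B x\<close>: rescale \<open>x\<close> onto the common boundary, where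
  \<open>a A x + b B x = 0\<close> and pairing with \<open>x\<close> forces \<open>a + b = 0\<close>. Hence the null cone of the
  symmetric matrix \<open>C = A - B\<close> lies in its kernel. Such a form is semidefinite: if
  \<open>q\<^sub>C y > 0 > q\<^sub>C x\<close>, it vanishes at some \<open>v = (1 - t) y + t x\<close>, and \<open>C v = 0\<close> gives
  \<open>(1 - t)\<^sup>2 q\<^sub>C y = q\<^sub>C (v - t x) = t\<^sup>2 q\<^sub>C x\<close>, which is impossible. Semidefiniteness of
  \<open>A - B\<close> is the claimed inclusion.
\<close>

lemma symmetric_matrix_inner_commute:
  fixes M :: "real^'n^'n"
  assumes "transpose M = M"
  shows "x \<bullet> (M *v y) = y \<bullet> (M *v x)"
proof -
  have "x \<bullet> (M *v y) = (transpose M *v x) \<bullet> y"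
    by (simp add: dot_lmul_matrix transpose_matrix_vector)
  then show ?thesis
    using assms by (simp add: inner_commute)
qed

lemma quadratic_form_add_scaled:
  fixes M :: "real^'n^'n"
  assumes "transpose M = M"
  shows "(z + t *\<^sub>R w) \<bullet> (M *v (z + t *\<^sub>R w)) =
           z \<bullet> (M *v z) + 2 * t * (w \<bullet> (M *v z)) + t\<^sup>2 * (w \<bullet> (M *v w))"
  using symmetric_matrix_inner_commute[OF assms, of z w]
  by (simp add: algebra_simps inner_add_left inner_add_right power2_eq_square)

lemma quadratic_form_scaleR:
  fixes M :: "real^'n^'n"
  shows "(c *\<^sub>R x) \<bullet> (M *v (c *\<^sub>R x)) = c\<^sup>2 * (x \<bullet> (M *v x))"
  by (simp add: matrix_vector_mult_scaleR power2_eq_square)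

lemma nonneg_linear_plus_quadratic_imp_linear_zero:
  fixes a b :: real
  assumes "\<And>t. 0 \<le> b * t + a * t\<^sup>2" and "0 \<le> a"
  shows "b = 0"
proof -
  define t where "t = - b / (a + 1)"
  have "0 \<le> b * t + a * t\<^sup>2"
    using assms(1) .
  also have "\<dots> = - b\<^sup>2 / (a + 1)\<^sup>2"
    using \<open>0 \<le> a\<close> by (simp add: t_def divide_simps power2_eq_square) algebra
  finally have "b\<^sup>2 \<le> 0"
    using \<open>0 \<le> a\<close> by (simp add: divide_le_0_iff)
  then show "b = 0"
    by simp
qed

lemma psd_quadratic_form_eq_0_imp_kernel:
  fixes M :: "real^'n^'n"
  assumes sym: "transpose M = M" and psd: "\<forall>x. 0 \<le> x \<bullet> (M *v x)"
    and "z \<bullet> (M *v z) = 0"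
  shows "M *v z = 0"
proof -
  define w where "w = M *v z"
  have "0 \<le> 2 * (w \<bullet> w) * t + (w \<bullet> (M *v w)) * t\<^sup>2" for t
    using psd[rule_format, of "z + t *\<^sub>R w"] \<open>z \<bullet> (M *v z) = 0\<close>
    unfolding quadratic_form_add_scaled[OF sym] by (simp add: w_def mult.commute)
  then have "2 * (w \<bullet> w) = 0"
    using psd nonneg_linear_plus_quadratic_imp_linear_zero by blast
  then show ?thesis
    by (simp add: w_def)
qed

lemma symmetric_matrix_semidefinite_if_null_cone_in_kernel:
  fixes C :: "real^'n^'n"
  assumes sym: "transpose C = C"
    and null: "\<And>v. v \<bullet> (C *v v) = 0 \<Longrightarrow> C *v v = 0"
  shows "(\<forall>x. 0 \<le> x \<bullet> (C *v x)) \<or> (\<forall>x. x \<bullet> (C *v x) \<le> 0)"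
proof (rule ccontr)
  assume "\<not> ?thesis"
  then obtain x y where x: "x \<bullet> (C *v x) < 0" and y: "0 < y \<bullet> (C *v y)"
    by (auto simp: not_le)
  define g where "g t = (y + t *\<^sub>R (x - y)) \<bullet> (C *v (y + t *\<^sub>R (x - y)))" for t
  have g_poly: "g = (\<lambda>t. y \<bullet> (C *v y) + 2 * t * ((x - y) \<bullet> (C *v y))
                       + t\<^sup>2 * ((x - y) \<bullet> (C *v (x - y))))"
    unfolding g_def by (rule ext) (rule quadratic_form_add_scaled[OF sym])
  have "continuous_on {0..1} g"
    unfolding g_poly by (intro continuous_intros)
  moreover have "g 1 < 0" "0 < g 0"
    using x y by (simp_all add: g_def)
  ultimately have "\<exists>t. 0 \<le> t \<and> t \<le> 1 \<and> g t = 0"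
    by (intro IVT2') simp_all
  then obtain t where "g t = 0"
    by blast
  define v where "v = y + t *\<^sub>R (x - y)"
  have Cv: "C *v v = 0"
    using \<open>g t = 0\<close> null by (simp add: g_def v_def)
  have "(1 - t)\<^sup>2 * (y \<bullet> (C *v y)) = ((1 - t) *\<^sub>R y) \<bullet> (C *v ((1 - t) *\<^sub>R y))"
    by (rule quadratic_form_scaleR[symmetric])
  also have "(1 - t) *\<^sub>R y = v + (- t) *\<^sub>R x"
    by (simp add: v_def algebra_simps)
  also have "(v + (- t) *\<^sub>R x) \<bullet> (C *v (v + (- t) *\<^sub>R x)) = t\<^sup>2 * (x \<bullet> (C *v x))"
    unfolding quadratic_form_add_scaled[OF sym] by (simp add: Cv)
  finally have "(1 - t)\<^sup>2 * (y \<bullet> (C *v y)) = t\<^sup>2 * (x \<bullet> (C *v x))" .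
  moreover have "0 \<le> (1 - t)\<^sup>2 * (y \<bullet> (C *v y))" "t\<^sup>2 * (x \<bullet> (C *v x)) \<le> 0"
    using x y by (simp_all add: mult_nonpos_nonneg mult_nonneg_nonpos)
  ultimately have "(1 - t)\<^sup>2 = 0" "t\<^sup>2 = 0"
    using x y by (simp_all add: mult_le_0_iff)
  then show False
    by simp
qed

lemma nontransversal_equal_quadratic_forms_imp_equal:
  fixes A B :: "real^'n^'n"
  assumes symA: "transpose A = A" and symB: "transpose B = B"
    and psdA: "\<forall>x. 0 \<le> x \<bullet> (A *v x)" and psdB: "\<forall>x. 0 \<le> x \<bullet> (B *v x)"
    and notrans: "\<forall>x. x \<bullet> (A *v x) = 1 \<and> x \<bullet> (B *v x) = 1 \<longrightarrow>
        (\<exists>a b :: real. (a \<noteq> 0 \<or> b \<noteq> 0) \<and> a *\<^sub>R (A *v x) + b *\<^sub>R (B *v x) = 0)"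
    and eq: "z \<bullet> (A *v z) = z \<bullet> (B *v z)"
  shows "A *v z = B *v z"
proof (cases "z \<bullet> (A *v z) = 0")
  case True
  then show ?thesis
    using psd_quadratic_form_eq_0_imp_kernel[OF symA psdA]
      psd_quadratic_form_eq_0_imp_kernel[OF symB psdB] eq
    by metis
next
  case False
  define s where "s = z \<bullet> (A *v z)"
  have "0 < s"
    using False psdA by (simp add: s_def order_less_le)
  define u where "u = (1 / sqrt s) *\<^sub>R z"
  have z_u: "z = sqrt s *\<^sub>R u"
    using \<open>0 < s\<close> by (simp add: u_def)
  have "u \<bullet> (A *v u) = (1 / sqrt s)\<^sup>2 * s" "u \<bullet> (B *v u) = (1 / sqrt s)\<^sup>2 * s"
    by (simp_all only: u_def quadratic_form_scaleR s_def eq)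
  then have "u \<bullet> (A *v u) = 1" "u \<bullet> (B *v u) = 1"
    using \<open>0 < s\<close> by (simp_all add: power_divide)
  then obtain a b :: real where ab: "a \<noteq> 0 \<or> b \<noteq> 0"
    and lin: "a *\<^sub>R (A *v u) + b *\<^sub>R (B *v u) = 0"
    using notrans by blast
  have "a + b = u \<bullet> (a *\<^sub>R (A *v u) + b *\<^sub>R (B *v u))"
    using \<open>u \<bullet> (A *v u) = 1\<close> \<open>u \<bullet> (B *v u) = 1\<close> by (simp add: inner_add_right)
  then have "b = - a" "a \<noteq> 0"
    using lin ab by auto
  then have "A *v u = B *v u"
    using lin by (simp add: algebra_simps)
  then show ?thesis
    by (simp add: z_u matrix_vector_mult_scaleR)
qed

theorem proposition2p5:
  fixes A B :: "real^'n^'n"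
  assumes symA: "transpose A = A" and symB: "transpose B = B"
    and psdA: "\<forall>x. 0 \<le> x \<bullet> (A *v x)" and psdB: "\<forall>x. 0 \<le> x \<bullet> (B *v x)"
    and rankA: "rank A \<ge> 2" and rankB: "rank B \<ge> 2"
    and notrans: "\<forall>x. x \<bullet> (A *v x) = 1 \<and> x \<bullet> (B *v x) = 1 \<longrightarrow>
        (\<exists>a b :: real. (a \<noteq> 0 \<or> b \<noteq> 0) \<and> a *\<^sub>R (A *v x) + b *\<^sub>R (B *v x) = 0)"
    and meet: "{x. x \<bullet> (B *v x) < 1} \<inter> {x. x \<bullet> (A *v x) < 1} \<noteq> {}"
  shows "{x. x \<bullet> (B *v x) < 1} \<subseteq> {x. x \<bullet> (A *v x) < 1} \<or>
         {x. x \<bullet> (A *v x) < 1} \<subseteq> {x. x \<bullet> (B *v x) < 1}"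
proof -
  have diff: "x \<bullet> ((A - B) *v x) = x \<bullet> (A *v x) - x \<bullet> (B *v x)" for x
    by (simp add: matrix_vector_mult_diff_rdistrib inner_diff_right)
  have "transpose (A - B) = A - B"
    using symA symB by (simp add: transpose_def vec_eq_iff)
  moreover have "(A - B) *v v = 0" if "v \<bullet> ((A - B) *v v) = 0" for v
    using nontransversal_equal_quadratic_forms_imp_equal[OF symA symB psdA psdB notrans, of v]
      that unfolding diff by (simp add: matrix_vector_mult_diff_rdistrib)
  ultimately have "(\<forall>x. 0 \<le> x \<bullet> ((A - B) *v x)) \<or> (\<forall>x. x \<bullet> ((A - B) *v x) \<le> 0)"
    by (rule symmetric_matrix_semidefinite_if_null_cone_in_kernel)
  then show ?thesis
    unfolding diff by (smt (verit) Collect_mono)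
qed

end
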